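(* Let $M\in\mathbb{R}^{p\times q}_+$ and suppose $M$ has a psd factorization of size $k$. Then $M$ admits a psd factorization $M_{ij}=\langle A_i,B_j\rangle$ with $A_i,B_j\in\mathcal{S}^k_+$ such that $\operatorname{trace}(A_i)\le k$ for all $i=1,\dots,p$ and $\operatorname{trace}(B_j)=\sum_{i=1}^pM_{ij}$ for all $j=1,\dots,q$.
   Context: $\mathcal{S}^k_+$ denotes the cone of $k\times k$ real symmetric positive semidefinite matrices, with inner product $\langle A,B\rangle = \operatorname{trace}(AB)$. A psd factorization of size $k$ of a nonnegative matrix $M\in\mathbb{R}^{p\times q}_+$ is a collection $A_1,\dots,A_p, B_1,\dots,B_q \in \mathcal{S}^k_+$ with $M_{ij} = \langle A_i, B_j\rangle$ for all $i,j$. *)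

theory Defs
  imports "HOL-Analysis.Analysis"
begin

definition psd :: "real^'k^'k \<Rightarrow> bool" where
  "psd A \<longleftrightarrow> transpose A = A \<and> (\<forall>x :: real^'k. 0 \<le> x \<bullet> (A *v x))"

definition tr_inner :: "real^'k^'k \<Rightarrow> real^'k^'k \<Rightarrow> real" where
  "tr_inner A B = trace (A ** B)"

text \<open>psd factorization of size CARD('k) of a p x q matrix M (entries M i j, i<p, j<q).\<close>
definition psd_factorization ::
  "nat \<Rightarrow> nat \<Rightarrow> (nat \<Rightarrow> nat \<Rightarrow> real) \<Rightarrow> (nat \<Rightarrow> real^'k^'k) \<Rightarrow> (nat \<Rightarrow> real^'k^'k) \<Rightarrow> bool" where
  "psd_factorization p q M A B \<longleftrightarrow>
     (\<forall>i<p. psd (A i)) \<and> (\<forall>j<q. psd (B j)) \<and>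
     (\<forall>i<p. \<forall>j<q. M i j = tr_inner (A i) (B j))"

end

theory Submission
  imports Defs
begin

(*
  Let S = sum_i A i.  Since <A i, B j> is invariant under the simultaneous orthogonal
  congruence X |-> U^T X U, we may first diagonalise the symmetric matrix S and so assume
  that S is diagonal, with diagonal entries d a >= 0.  Every A i is then dominated on the
  diagonal by S (A i a a <= d a), and whenever d a = 0 the a-th row and column of every A i
  vanish.  Rescaling A i by D^(-1/2) and B j by D^(1/2) (pseudo-inverse on the zero entries),
  the trace inner products are unchanged, trace (A i) = sum_a A i a a / d a <= k, and
  trace (B j) = sum_a d a * B j a a = <S, B j> = sum_i M i j.
*)

lemma symmetric_form_swap:
  fixes S :: "real^'n^'n"
  assumes "transpose S = S"
  shows "x \<bullet> (S *v y) = y \<bullet> (S *v x)"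
  by (metis assms dot_lmul_matrix inner_commute vector_transpose_matrix)

text \<open>This is the Cauchy--Schwarz argument:
  the quadratic t \<mapsto> Q(x + t y) is nonnegative and has no constant term.\<close>
lemma psd_form_isotropic_vector:
  fixes X :: "real^'n^'n"
  assumes sym: "transpose X = X" and V: "subspace V"
    and psd_on_V: "\<forall>z\<in>V. 0 \<le> z \<bullet> (X *v z)"
    and x: "x \<in> V" and isotropic: "x \<bullet> (X *v x) = 0" and y: "y \<in> V"
  shows "y \<bullet> (X *v x) = 0"
proof -
  define b where "b = y \<bullet> (X *v x)"
  define c where "c = y \<bullet> (X *v y)"
  have c_nonneg: "c \<ge> 0" using psd_on_V y c_def by auto
  have quadratic_nonneg: "0 \<le> 2 * t * b + t\<^sup>2 * c" for t
  proof -
    have "x + t *\<^sub>R y \<in> V" using V x y by (simp add: subspace_add subspace_scale)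
    then have "0 \<le> (x + t *\<^sub>R y) \<bullet> (X *v (x + t *\<^sub>R y))" using psd_on_V by blast
    also have "\<dots> = x \<bullet> (X *v x) + t * (x \<bullet> (X *v y)) + t * (y \<bullet> (X *v x))
                      + t\<^sup>2 * (y \<bullet> (X *v y))"
      by (simp add: matrix_vector_right_distrib matrix_vector_mult_scaleR inner_add_left
          inner_add_right power2_eq_square algebra_simps)
    also have "\<dots> = 2 * t * b + t\<^sup>2 * c"
      using isotropic symmetric_form_swap[OF sym, of x y] by (simp add: b_def c_def)
    finally show ?thesis .
  qed
  define s where "s = 1 / (c + 1)"
  have s_pos: "s > 0" and sc: "s * c < 1" using c_nonneg by (simp_all add: s_def field_simps)
  have "0 \<le> 2 * (- (b * s)) * b + (- (b * s))\<^sup>2 * c" by (rule quadratic_nonneg)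
  also have "\<dots> = b\<^sup>2 * (s * (s * c - 2))" by (simp add: power2_eq_square algebra_simps)
  finally have "0 \<le> b\<^sup>2 * (s * (s * c - 2))" .
  moreover have "s * (s * c - 2) < 0" using s_pos sc by (simp add: mult_pos_neg)
  ultimately have "b\<^sup>2 \<le> 0" by (smt (verit) mult_pos_neg zero_le_power2)
  then show ?thesis unfolding b_def[symmetric] by simp
qed

lemma rayleigh_maximiser_eigenvector:
  fixes S :: "real^'n^'n"
  assumes sym: "transpose S = S" and V: "subspace V" and inv: "\<forall>x\<in>V. S *v x \<in> V"
    and x0: "x0 \<in> V" "norm x0 = 1"
    and max: "\<And>y. y \<in> V \<Longrightarrow> norm y = 1 \<Longrightarrow> y \<bullet> (S *v y) \<le> x0 \<bullet> (S *v x0)"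
  shows "S *v x0 = (x0 \<bullet> (S *v x0)) *\<^sub>R x0"
proof -
  define l where "l = x0 \<bullet> (S *v x0)"
  define X where "X = l *\<^sub>R mat 1 - S"
  have X_apply: "X *v z = l *\<^sub>R z - S *v z" for z
    by (simp add: X_def matrix_vector_mult_diff_rdistrib flip: scaleR_matrix_vector_assoc)
  have "transpose (P - Q) = transpose P - transpose Q" for P Q :: "real^'n^'n"
    by (simp add: transpose_def vec_eq_iff)
  then have sym_X: "transpose X = X" by (simp add: X_def sym transpose_scalar)
  have psd_X: "\<forall>z\<in>V. 0 \<le> z \<bullet> (X *v z)"
  proof
    fix z assume zV: "z \<in> V"
    show "0 \<le> z \<bullet> (X *v z)"
    proof (cases "z = 0")
      case False
      let ?w = "z /\<^sub>R norm z"
      have "?w \<bullet> (S *v ?w) \<le> l"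
        using max[of ?w] zV False V by (simp add: l_def subspace_scale)
      moreover have "?w \<bullet> (S *v ?w) = (z \<bullet> (S *v z)) / (norm z)\<^sup>2"
        by (simp add: matrix_vector_mult_scaleR power2_eq_square divide_inverse)
      ultimately have "z \<bullet> (S *v z) \<le> l * (norm z)\<^sup>2"
        using False by (simp add: divide_le_eq)
      then show ?thesis by (simp add: X_apply inner_diff_right power2_norm_eq_inner)
    qed simp
  qed
  have "x0 \<bullet> (X *v x0) = 0"
    using x0(2) by (simp add: X_apply inner_diff_right l_def norm_eq_1)
  moreover have "X *v x0 \<in> V" using inv V x0 by (simp add: X_apply subspace_diff subspace_scale)
  ultimately have "(X *v x0) \<bullet> (X *v x0) = 0"
    using psd_form_isotropic_vector[OF sym_X V psd_X x0(1)] by blast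
  then show ?thesis by (simp add: X_apply l_def)
qed

text \<open>Induction on the dimension: take a Rayleigh maximiser and pass to its
  orthogonal complement, which is again invariant.\<close>
lemma orthonormal_eigenbasis:
  fixes S :: "real^'n^'n"
  assumes sym: "transpose S = S"
  shows "subspace V \<Longrightarrow> (\<forall>x\<in>V. S *v x \<in> V) \<Longrightarrow>
    \<exists>B. B \<subseteq> V \<and> pairwise orthogonal B \<and> (\<forall>x\<in>B. norm x = 1) \<and> span B = V \<and>
        (\<forall>x\<in>B. \<exists>l. S *v x = l *\<^sub>R x)"
proof (induction "dim V" arbitrary: V rule: less_induct)
  case less
  note V = less.prems(1) and inv = less.prems(2)
  show ?case
  proof (cases "V = {0}")
    case True
    then show ?thesis by (intro exI[of _ "{}"]) auto
  next
    case False
    then obtain v where v: "v \<in> V" "v \<noteq> 0" using V subspace_0 by blast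
    define K where "K = V \<inter> sphere 0 1"
    have "compact K" unfolding K_def
      using V closed_subspace compact_Int_closed compact_sphere by (metis inf_commute)
    moreover have "v /\<^sub>R norm v \<in> K" using v V by (simp add: K_def subspace_scale)
    moreover have "continuous_on K (\<lambda>x. x \<bullet> (S *v x))"
      by (intro continuous_intros linear_continuous_on matrix_vector_mul_linear)
    ultimately obtain x0 where x0: "x0 \<in> K"
      and x0_max: "\<And>y. y \<in> K \<Longrightarrow> y \<bullet> (S *v y) \<le> x0 \<bullet> (S *v x0)"
      using continuous_attains_sup by (metis empty_iff)
    have x0V: "x0 \<in> V" and x0_unit: "norm x0 = 1" using x0 by (auto simp: K_def)
    obtain l where eig: "S *v x0 = l *\<^sub>R x0"
      using rayleigh_maximiser_eigenvector[OF sym V inv x0V x0_unit] by (simp add: K_def x0_max)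
    define V' where "V' = {x \<in> V. x \<bullet> x0 = 0}"
    have V'_subspace: "subspace V'"
      using V unfolding V'_def subspace_def by (auto simp: inner_add_left)
    have V'_inv: "\<forall>x\<in>V'. S *v x \<in> V'"
    proof
      fix x assume "x \<in> V'"
      then have "x \<in> V" "x \<bullet> x0 = 0" by (auto simp: V'_def)
      moreover have "(S *v x) \<bullet> x0 = x \<bullet> (S *v x0)"
        using symmetric_form_swap[OF sym, of x0 x] by (simp add: inner_commute)
      ultimately show "S *v x \<in> V'" using inv eig by (simp add: V'_def inner_commute)
    qed
    have x0x0: "x0 \<bullet> x0 = 1" using x0_unit by (simp add: norm_eq_1)
    have "dim V' < dim V"
    proof (rule dim_psubset)
      have "V' \<subseteq> V" "x0 \<notin> V'" using x0x0 by (auto simp: V'_def)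
      then show "span V' \<subset> span V"
        using V'_subspace V x0V by (metis psubsetI span_eq_iff)
    qed
    then obtain B' where B': "B' \<subseteq> V'" "pairwise orthogonal B'" "\<forall>x\<in>B'. norm x = 1"
        "span B' = V'" "\<forall>x\<in>B'. \<exists>l. S *v x = l *\<^sub>R x"
      using less.hyps V'_subspace V'_inv by blast
    have span_V: "V \<subseteq> span (insert x0 B')"
    proof
      fix z assume zV: "z \<in> V"
      define w where "w = z - (z \<bullet> x0) *\<^sub>R x0"
      have "w \<in> V'" using zV x0V V x0x0
        by (simp add: V'_def w_def subspace_diff subspace_scale inner_diff_left)
      then have "w \<in> span (insert x0 B')" using B'(4) by (metis span_mono subset_insertI subsetD)
      moreover have "(z \<bullet> x0) *\<^sub>R x0 \<in> span (insert x0 B')" by (simp add: span_base span_mul)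
      ultimately have "w + (z \<bullet> x0) *\<^sub>R x0 \<in> span (insert x0 B')" by (rule span_add)
      then show "z \<in> span (insert x0 B')" by (simp add: w_def)
    qed
    show ?thesis
    proof (intro exI[of _ "insert x0 B'"] conjI)
      show sub: "insert x0 B' \<subseteq> V" using B'(1) x0V by (auto simp: V'_def)
      show "pairwise orthogonal (insert x0 B')"
        using B'(1,2) by (auto simp: pairwise_insert V'_def orthogonal_def inner_commute)
      show "\<forall>x\<in>insert x0 B'. norm x = 1" using B'(3) x0_unit by auto
      show "\<forall>x\<in>insert x0 B'. \<exists>l. S *v x = l *\<^sub>R x" using B'(5) eig by blast
      show "span (insert x0 B') = V" using sub V span_V by (simp add: span_minimal antisym)
    qed
  qed
qed

lemma congruence_entry:
  fixes U S :: "real^'n^'n"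
  shows "(transpose U ** S ** U) $ a $ b = column a U \<bullet> (S *v column b U)"
  by (simp add: matrix_matrix_mult_def transpose_def inner_vec_def matrix_vector_mult_def
      column_def sum_distrib_left sum_distrib_right mult_ac) (subst sum.swap, simp add: mult_ac)

lemma symmetric_orthogonal_diagonalisation:
  fixes S :: "real^'n^'n"
  assumes sym: "transpose S = S"
  obtains U where "orthogonal_matrix U" "\<And>a b. a \<noteq> b \<Longrightarrow> (transpose U ** S ** U) $ a $ b = 0"
proof -
  obtain B where B: "pairwise orthogonal B" "\<forall>x\<in>B. norm x = 1" "span B = UNIV"
      "\<forall>x\<in>B. \<exists>l. S *v x = l *\<^sub>R x"
    using orthonormal_eigenbasis[OF sym, of UNIV] by auto
  have "0 \<notin> B" using B(2) by force
  then have indep: "independent B" using B(1) pairwise_orthogonal_independent by blast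
  then have "card B = CARD('n)"
    using basis_card_eq_dim[of B UNIV] B(3) by auto
  then obtain f where f: "bij_betw f (UNIV::'n set) B"
    by (metis finite_class.finite_UNIV finite_same_card_bij finiteI_independent indep card_UNIV)
  have f_unit: "norm (f i) = 1" for i using bij_betwE[OF f] B(2) by blast
  have f_orth: "orthogonal (f i) (f j)" if "i \<noteq> j" for i j
    using B(1) f that by (auto simp: pairwise_def bij_betw_def inj_on_def)
  define U where "U = (\<chi> i j. f j $ i)"
  have col: "column j U = f j" for j by (simp add: U_def column_def)
  show thesis
  proof
    show "orthogonal_matrix U"
      by (simp add: orthogonal_matrix_orthonormal_columns col f_unit f_orth)
    fix a b :: 'n assume ab: "a \<noteq> b"
    obtain l where "S *v f b = l *\<^sub>R f b" using B(4) bij_betwE[OF f] by blast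
    then show "(transpose U ** S ** U) $ a $ b = 0"
      using f_orth[OF ab] by (simp add: congruence_entry col orthogonal_def)
  qed
qed

lemma psd_symmetric_entry:
  fixes X :: "real^'n^'n"
  assumes "psd X"
  shows "X $ b $ a = X $ a $ b"
  using assms unfolding psd_def by (metis transpose_def vec_lambda_beta)

lemma psd_diag_nonneg:
  fixes X :: "real^'n^'n"
  assumes "psd X"
  shows "0 \<le> X $ a $ a"
proof -
  have "0 \<le> axis a 1 \<bullet> (X *v axis a 1)" using assms by (simp add: psd_def)
  then show ?thesis by (simp add: inner_axis' matrix_vector_mult_basis column_def)
qed

lemma psd_zero_diag_row:
  fixes X :: "real^'n^'n"
  assumes psd: "psd X" and zero: "X $ a $ a = 0"
  shows "X $ a $ b = 0 \<and> X $ b $ a = 0"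
proof -
  have "axis b 1 \<bullet> (X *v axis a 1) = 0"
    by (rule psd_form_isotropic_vector[OF _ subspace_UNIV])
      (use psd zero in \<open>auto simp: psd_def inner_axis' matrix_vector_mult_basis column_def\<close>)
  then have "X $ b $ a = 0" by (simp add: inner_axis' matrix_vector_mult_basis column_def)
  then show ?thesis using psd_symmetric_entry[OF psd] by simp
qed

lemma psd_sum_zero_diag:
  fixes A :: "nat \<Rightarrow> real^'n^'n"
  assumes psd: "\<And>i. i \<in> I \<Longrightarrow> psd (A i)" and fin: "finite I"
    and zero: "(\<Sum>i\<in>I. A i) $ a $ a = 0" and i: "i \<in> I"
  shows "A i $ a $ b = 0 \<and> A i $ b $ a = 0"
proof -
  have nonneg: "\<And>j. j \<in> I \<Longrightarrow> 0 \<le> A j $ a $ a" using psd psd_diag_nonneg by blast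
  have "(\<Sum>j\<in>I. A j $ a $ a) = 0" using zero by (simp add: sum_component)
  then have "A i $ a $ a = 0" using sum_nonneg_eq_0_iff[OF fin, of "\<lambda>j. A j $ a $ a"] nonneg i by blast
  then show ?thesis by (rule psd_zero_diag_row[OF psd[OF i]])
qed

lemma matrix_add_rdistrib:
  fixes A B :: "real^'n^'m" and C :: "real^'p^'n"
  shows "(A + B) ** C = A ** C + B ** C"
  by (simp add: vec_eq_iff matrix_matrix_mult_def sum.distrib ring_distribs)

lemma sum_congruence:
  fixes U :: "real^'n^'n" and A :: "nat \<Rightarrow> real^'n^'n"
  shows "(\<Sum>i<p. transpose U ** A i ** U) = transpose U ** (\<Sum>i<p. A i) ** U"
  by (induction p) (simp_all add: matrix_add_ldistrib matrix_add_rdistrib)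

lemma psd_congruence:
  fixes U A :: "real^'n^'n"
  assumes "psd A"
  shows "psd (transpose U ** A ** U)"
  unfolding psd_def
proof (intro conjI allI)
  show "transpose (transpose U ** A ** U) = transpose U ** A ** U"
    using assms by (simp add: psd_def matrix_transpose_mul matrix_mul_assoc)
  fix x :: "real^'n"
  have "(transpose U ** A ** U) *v x = transpose U *v (A *v (U *v x))"
    by (simp add: matrix_vector_mul_assoc matrix_mul_assoc)
  then have "x \<bullet> ((transpose U ** A ** U) *v x) = (U *v x) \<bullet> (A *v (U *v x))"
    by (metis dot_lmul_matrix inner_commute transpose_matrix_vector)
  then show "0 \<le> x \<bullet> ((transpose U ** A ** U) *v x)"
    using assms by (simp add: psd_def)
qed

lemma tr_inner_orthogonal_congruence:
  fixes U A B :: "real^'n^'n"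
  assumes "orthogonal_matrix U"
  shows "tr_inner (transpose U ** A ** U) (transpose U ** B ** U) = tr_inner A B"
proof -
  have UU: "U ** transpose U = mat 1" using assms by (simp add: orthogonal_matrix_def)
  have "(transpose U ** A ** U) ** (transpose U ** B ** U) = transpose U ** ((A ** B) ** U)"
    by (simp add: matrix_mul_assoc) (metis UU matrix_mul_assoc matrix_mul_rid)
  then have "tr_inner (transpose U ** A ** U) (transpose U ** B ** U)
           = trace (transpose U ** ((A ** B) ** U))"
    by (simp add: tr_inner_def)
  also have "\<dots> = trace (((A ** B) ** U) ** transpose U)" by (rule trace_mul_sym)
  also have "\<dots> = tr_inner A B" by (simp add: UU tr_inner_def flip: matrix_mul_assoc)
  finally show ?thesis .
qed

lemma psd_factorization_orthogonal_congruence: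
  fixes U :: "real^'k^'k"
  assumes "orthogonal_matrix U" and "psd_factorization p q M A B"
  shows "psd_factorization p q M (\<lambda>i. transpose U ** A i ** U) (\<lambda>j. transpose U ** B j ** U)"
  using assms by (simp add: psd_factorization_def psd_congruence tr_inner_orthogonal_congruence)

definition diag_congruence :: "('n \<Rightarrow> real) \<Rightarrow> real^'n^'n \<Rightarrow> real^'n^'n" where
  "diag_congruence g X = (\<chi> a b. g a * X $ a $ b * g b)"

lemma psd_diag_congruence:
  fixes X :: "real^'n^'n"
  assumes "psd X"
  shows "psd (diag_congruence g X)"
  unfolding psd_def diag_congruence_def
proof (intro conjI allI)
  show "transpose (\<chi> a b. g a * X$a$b * g b) = (\<chi> a b. g a * X$a$b * g b)"
    using psd_symmetric_entry[OF assms] by (simp add: transpose_def vec_eq_iff mult_ac)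
  fix x :: "real^'n"
  have "x \<bullet> ((\<chi> a b. g a * X$a$b * g b) *v x) = (\<chi> a. g a * x$a) \<bullet> (X *v (\<chi> a. g a * x$a))"
    by (simp add: inner_vec_def matrix_vector_mult_def sum_distrib_left mult_ac)
  then show "0 \<le> x \<bullet> ((\<chi> a b. g a * X$a$b * g b) *v x)"
    using assms by (simp add: psd_def)
qed

lemma trace_diag_congruence:
  "trace (diag_congruence g X) = (\<Sum>a\<in>UNIV. (g a)\<^sup>2 * X $ a $ a)"
  by (simp add: trace_def diag_congruence_def power2_eq_square mult_ac)

lemma tr_inner_entries:
  fixes Y Z :: "real^'n^'n"
  shows "tr_inner Y Z = (\<Sum>a\<in>UNIV. \<Sum>b\<in>UNIV. Y $ a $ b * Z $ b $ a)"
  by (simp add: tr_inner_def trace_def matrix_matrix_mult_def)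

lemma tr_inner_diag_congruence:
  fixes X Y :: "real^'n^'n"
  assumes inverse: "\<And>a. e a * f a = 1 \<or> (\<forall>b. X $ a $ b = 0 \<and> X $ b $ a = 0)"
  shows "tr_inner (diag_congruence e X) (diag_congruence f Y) = tr_inner X Y"
proof -
  have entrywise: "(e a * X$a$b * e b) * (f b * Y$b$a * f a) = X$a$b * Y$b$a" for a b
  proof -
    have "e a * f a = 1 \<or> X$a$b = 0" "e b * f b = 1 \<or> X$a$b = 0"
      using inverse[of a] inverse[of b] by blast+
    then have "(e a * f a) * (e b * f b) * (X$a$b * Y$b$a) = X$a$b * Y$b$a" by auto
    then show ?thesis by (simp add: mult_ac)
  qed
  show ?thesis by (simp only: tr_inner_entries diag_congruence_def vec_lambda_beta entrywise)
qed

lemma tr_inner_sum_left: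
  fixes A :: "nat \<Rightarrow> real^'n^'n"
  shows "tr_inner (\<Sum>i\<in>I. A i) Y = (\<Sum>i\<in>I. tr_inner (A i) Y)"
proof -
  have "tr_inner (\<Sum>i\<in>I. A i) Y = (\<Sum>a\<in>UNIV. \<Sum>b\<in>UNIV. \<Sum>i\<in>I. A i $ a $ b * Y $ b $ a)"
    by (simp add: tr_inner_entries sum_component sum_distrib_right)
  also have "\<dots> = (\<Sum>a\<in>UNIV. \<Sum>i\<in>I. \<Sum>b\<in>UNIV. A i $ a $ b * Y $ b $ a)"
    by (rule sum.cong[OF refl], rule sum.swap)
  also have "\<dots> = (\<Sum>i\<in>I. tr_inner (A i) Y)"
    unfolding tr_inner_entries by (rule sum.swap)
  finally show ?thesis .
qed

lemma tr_inner_diagonal_left: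
  fixes D Y :: "real^'n^'n"
  assumes "\<And>a b. a \<noteq> b \<Longrightarrow> D $ a $ b = 0"
  shows "tr_inner D Y = (\<Sum>a\<in>UNIV. D $ a $ a * Y $ a $ a)"
proof -
  have "(\<Sum>b\<in>UNIV. D $ a $ b * Y $ b $ a) = D $ a $ a * Y $ a $ a" for a
  proof -
    have "(\<Sum>b\<in>UNIV. D $ a $ b * Y $ b $ a) = (\<Sum>b\<in>UNIV. if b = a then D $ a $ a * Y $ a $ a else 0)"
      by (rule sum.cong) (auto simp: assms)
    then show ?thesis by simp
  qed
  then show ?thesis by (simp add: tr_inner_entries)
qed

text \<open>The normalisation for a factorization whose left factors have diagonal sum D:
  rescale the left factors by D^(-1/2) and the right ones by D^(1/2).\<close>
lemma psd_factorization_normalise_diagonal: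
  fixes A0 B0 :: "nat \<Rightarrow> real^'k^'k"
  assumes fact: "psd_factorization p q M A0 B0"
    and diagonal: "\<And>a b. a \<noteq> b \<Longrightarrow> (\<Sum>i<p. A0 i) $ a $ b = 0"
  shows "\<exists>A B :: nat \<Rightarrow> real^'k^'k.
           psd_factorization p q M A B \<and>
           (\<forall>i<p. trace (A i) \<le> real CARD('k)) \<and>
           (\<forall>j<q. trace (B j) = (\<Sum>i<p. M i j))"
proof -
  have psd_A0: "\<And>i. i < p \<Longrightarrow> psd (A0 i)" and psd_B0: "\<And>j. j < q \<Longrightarrow> psd (B0 j)"
    and M_A0: "\<And>i j. i < p \<Longrightarrow> j < q \<Longrightarrow> M i j = tr_inner (A0 i) (B0 j)"
    using fact by (auto simp: psd_factorization_def)
  define D where "D = (\<Sum>i<p. A0 i)"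
  define d where "d a = D $ a $ a" for a
  have d_sum: "d a = (\<Sum>i<p. A0 i $ a $ a)" for a by (simp add: d_def D_def sum_component)
  have A0_le_d: "A0 i $ a $ a \<le> d a" if "i < p" for i a
    unfolding d_sum by (rule member_le_sum) (use that psd_A0 psd_diag_nonneg in auto)
  have d_nonneg: "0 \<le> d a" for a
    unfolding d_sum by (rule sum_nonneg) (use psd_A0 psd_diag_nonneg in auto)
  define e where "e a = (if d a > 0 then 1 / sqrt (d a) else 0)" for a
  define f where "f a = sqrt (d a)" for a
  define A where "A i = diag_congruence e (A0 i)" for i
  define B where "B j = diag_congruence f (B0 j)" for j
  have "tr_inner (A i) (B j) = tr_inner (A0 i) (B0 j)" if "i < p" for i j
    unfolding A_def B_def
  proof (rule tr_inner_diag_congruence)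
    fix a
    show "e a * f a = 1 \<or> (\<forall>b. A0 i $ a $ b = 0 \<and> A0 i $ b $ a = 0)"
      using psd_sum_zero_diag[where I="{..<p}" and A=A0 and a=a and i=i] psd_A0 d_nonneg[of a] that
      by (auto simp: e_def f_def d_def D_def)
  qed
  then have fact': "psd_factorization p q M A B"
    using psd_A0 psd_B0 M_A0 by (simp add: psd_factorization_def A_def B_def psd_diag_congruence)
  have "trace (A i) \<le> real CARD('k)" if "i < p" for i
  proof -
    have "(e a)\<^sup>2 * A0 i $ a $ a \<le> 1" for a
      using A0_le_d[OF that, of a] d_nonneg[of a] by (simp add: e_def power_divide)
    then have "trace (A i) \<le> (\<Sum>a\<in>(UNIV::'k set). 1)"
      unfolding A_def trace_diag_congruence by (intro sum_mono)
    then show ?thesis by simp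
  qed
  moreover have "trace (B j) = (\<Sum>i<p. M i j)" if "j < q" for j
  proof -
    have "trace (B j) = (\<Sum>a\<in>UNIV. D $ a $ a * B0 j $ a $ a)"
      using d_nonneg by (simp add: B_def trace_diag_congruence f_def d_def)
    also have "\<dots> = tr_inner D (B0 j)"
      using diagonal by (simp add: tr_inner_diagonal_left D_def)
    also have "\<dots> = (\<Sum>i<p. M i j)"
      using that by (simp add: D_def tr_inner_sum_left M_A0)
    finally show ?thesis .
  qed
  ultimately show ?thesis using fact' by blast
qed

theorem lemma2p10:
  fixes p q :: nat and M :: "nat \<Rightarrow> nat \<Rightarrow> real"
    and A0 B0 :: "nat \<Rightarrow> real^'k^'k"
  assumes nonneg: "\<forall>i<p. \<forall>j<q. 0 \<le> M i j"
    and fact: "psd_factorization p q M A0 B0"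
  shows "\<exists>A B :: nat \<Rightarrow> real^'k^'k.
           psd_factorization p q M A B \<and>
           (\<forall>i<p. trace (A i) \<le> real CARD('k)) \<and>
           (\<forall>j<q. trace (B j) = (\<Sum>i<p. M i j))"
proof -
  define S where "S = (\<Sum>i<p. A0 i)"
  have psd_A0: "\<And>i. i < p \<Longrightarrow> psd (A0 i)" using fact by (simp add: psd_factorization_def)
  have S_symmetric: "transpose S = S"
    using psd_symmetric_entry[OF psd_A0] by (simp add: S_def transpose_def vec_eq_iff sum_component)
  obtain U where U: "orthogonal_matrix U"
    and diagonal: "\<And>a b. a \<noteq> b \<Longrightarrow> (transpose U ** S ** U) $ a $ b = 0"
    using symmetric_orthogonal_diagonalisation[OF S_symmetric] by blast
  have congruent: "psd_factorization p q M
      (\<lambda>i. transpose U ** A0 i ** U) (\<lambda>j. transpose U ** B0 j ** U)"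
    using U fact by (rule psd_factorization_orthogonal_congruence)
  have "(\<Sum>i<p. transpose U ** A0 i ** U) $ a $ b = 0" if "a \<noteq> b" for a b
    unfolding sum_congruence S_def[symmetric] using that by (rule diagonal)
  then show ?thesis by (rule psd_factorization_normalise_diagonal[OF congruent])
qed

end
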